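(* Let $L>0$ and let $\phi$ satisfy (H_φ). If $z\in H^1_0(0,L)$ and $\phi(z)\in L^2(0,L)$, then $\int_0^L\phi(z)\frac{dz}{dx}\,dx=0$.
   Context: (H_φ): $\phi:\mathbb{R}\to\mathbb{R}\cup\{+\infty\}$ is continuous when $\mathbb{R}\cup\{+\infty\}$ carries its usual topology, and $\phi(s)<+\infty$ for every $s\neq0$. *)

theory Defs
  imports "HOL-Analysis.Analysis"
begin

text \<open>Hypothesis (H_phi): phi maps R into R \<union> {+\<infinity>} (modelled inside ereal, never -\<infinity>),
  is continuous, and is finite away from 0.\<close>
definition H_phi :: "(real \<Rightarrow> ereal) \<Rightarrow> bool" where
  "H_phi \<phi> \<longleftrightarrow> continuous_on UNIV \<phi> \<and> (\<forall>s. \<phi> s \<noteq> -\<infinity>) \<and> (\<forall>s. s \<noteq> 0 \<longrightarrow> \<phi> s < \<infinity>)"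

definition L2_on :: "real \<Rightarrow> (real \<Rightarrow> real) \<Rightarrow> bool" where
  "L2_on L f \<longleftrightarrow> f \<in> borel_measurable (lebesgue_on {0..L})
                 \<and> integrable (lebesgue_on {0..L}) (\<lambda>x. (f x)^2)"

text \<open>z \<in> H^1_0(0,L) with (weak) derivative dz = dz/dx, using the standard one-dimensional
  description: dz \<in> L^2(0,L), z agrees a.e. with the absolutely continuous function
  x \<mapsto> \<integral>_0^x dz, and this representative vanishes at 0 and at L.\<close>
definition H10_with_deriv :: "real \<Rightarrow> (real \<Rightarrow> real) \<Rightarrow> (real \<Rightarrow> real) \<Rightarrow> bool" where
  "H10_with_deriv L z dz \<longleftrightarrow> L2_on L dz
     \<and> (AE x in lebesgue_on {0..L}. z x = integral\<^sup>L (lebesgue_on {0..x}) dz)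
     \<and> integral\<^sup>L (lebesgue_on {0..L}) dz = 0"

end

theory Submission
  imports Defs
begin

(* Write Z(x) for the integral of z' over [0,x], so that z = Z a.e. and Z(0) = Z(L) = 0.
   For continuous psi with antiderivative Psi, the chain rule for the absolutely continuous Z
   gives that the integral of psi(Z) Z' over [0,L] equals Psi(Z L) - Psi(Z 0) = 0. It is proved
   directly: on short intervals [u,v] the integral of psi(Z) Z' differs from psi(Z u) (Z v - Z u),
   and by the mean value theorem also Psi(Z v) - Psi(Z u), by a small multiple of the integral
   of |Z'|, and these errors add up.
   A general phi, which may be infinite at 0, is approximated by continuous truncations
   phi * kappa_n vanishing near 0; since phi(z) is finite a.e. and phi(z) z' is integrable
   (both factors are in L^2), dominated convergence passes to the limit. *)

lemma continuous_has_antiderivative: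
  fixes \<psi> :: "real \<Rightarrow> real"
  assumes "continuous_on UNIV \<psi>"
  obtains \<Psi> where "\<And>s. (\<Psi> has_real_derivative \<psi> s) (at s)"
  using einterval_antiderivative[of "-\<infinity>" "\<infinity>" \<psi>] assms
  by (auto simp: has_real_derivative_iff_has_vector_derivative continuous_on_eq_continuous_at)

lemma MVT_closed_segment:
  fixes \<Psi> \<psi> :: "real \<Rightarrow> real"
  assumes "\<And>s. (\<Psi> has_real_derivative \<psi> s) (at s)"
  obtains \<xi> where "\<xi> \<in> closed_segment u v" "\<Psi> v - \<Psi> u = \<psi> \<xi> * (v - u)"
proof (cases u v rule: linorder_cases)
  case less
  then obtain \<xi> where "u < \<xi>" "\<xi> < v" "\<Psi> v - \<Psi> u = (v - u) * \<psi> \<xi>"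
    using MVT2[of u v \<Psi> \<psi>] assms by blast
  then show ?thesis
    using that[of \<xi>] by (auto simp: closed_segment_eq_real_ivl algebra_simps)
next
  case equal
  then show ?thesis
    using that by auto
next
  case greater
  then obtain \<xi> where "v < \<xi>" "\<xi> < u" "\<Psi> u - \<Psi> v = (u - v) * \<psi> \<xi>"
    using MVT2[of v u \<Psi> \<psi>] assms by blast
  then show ?thesis
    using that[of \<xi>] by (auto simp: closed_segment_eq_real_ivl algebra_simps)
qed

lemma increment_bound_from_short_increments:
  fixes P Q :: "real \<Rightarrow> real"
  assumes "a \<le> b" "\<delta> > 0"
    and short: "\<And>u v. a \<le> u \<Longrightarrow> u \<le> v \<Longrightarrow> v \<le> b \<Longrightarrow> v - u < \<delta> \<Longrightarrow> \<bar>P v - P u\<bar> \<le> Q v - Q u"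
  shows "\<bar>P b - P a\<bar> \<le> Q b - Q a"
proof -
  define x where "x m = min (a + real m * \<delta> / 2) b" for m :: nat
  have grid: "\<bar>P (x m) - P a\<bar> \<le> Q (x m) - Q a" for m
  proof (induction m)
    case 0
    show ?case
      using assms by (simp add: x_def)
  next
    case (Suc m)
    have "a \<le> x m" "x m \<le> x (Suc m)" "x (Suc m) \<le> b" "x (Suc m) - x m < \<delta>"
      using assms by (auto simp: x_def min_def field_simps)
    then show ?case
      using Suc.IH short[of "x m" "x (Suc m)"] by linarith
  qed
  obtain m :: nat where "2 * (b - a) / \<delta> \<le> real m"
    using real_arch_simple by blast
  then have "x m = b"
    using assms by (auto simp: x_def min_def field_simps)
  then show ?thesis
    using grid[of m] by simp
qed

lemma integral_lebesgue_on_increment: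
  fixes f :: "real \<Rightarrow> real"
  assumes "integrable (lebesgue_on {a..b}) f" "a \<le> u" "u \<le> v" "v \<le> b"
  shows "integral\<^sup>L (lebesgue_on {a..v}) f - integral\<^sup>L (lebesgue_on {a..u}) f
         = integral\<^sup>L (lebesgue_on {u..v}) f"
  using Equivalence_Measurable_On_Borel.integral_combine[of a v f u]
    integrable_subinterval[OF assms(1), of a v] assms
  by simp

lemma integrable_continuous_on_mult:
  fixes f g :: "real \<Rightarrow> real"
  assumes f: "continuous_on {a..b} f" and g: "integrable (lebesgue_on {a..b}) g"
  shows "integrable (lebesgue_on {a..b}) (\<lambda>x. f x * g x)"
proof -
  have "(\<lambda>x. f x * g x) absolutely_integrable_on {a..b}"
  proof (rule absolutely_integrable_bounded_measurable_product_real)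
    show "f \<in> borel_measurable (lebesgue_on {a..b})"
      using f by (rule continuous_imp_measurable_on_sets_lebesgue) simp
    show "bounded (f ` {a..b})"
      using f by (simp add: compact_continuous_image compact_imp_bounded)
    show "g absolutely_integrable_on {a..b}"
      using g by (simp add: set_integrable_def integrable_restrict_space)
  qed simp
  then show ?thesis
    by (simp add: absolutely_integrable_imp_integrable)
qed

lemma chain_rule_short_interval_estimate:
  fixes \<psi> \<Psi> Z g :: "real \<Rightarrow> real"
  assumes \<Psi>: "\<And>s. (\<Psi> has_real_derivative \<psi> s) (at s)"
    and "u \<le> v" and Z: "continuous_on {u..v} Z"
    and Z_increment: "Z v - Z u = integral\<^sup>L (lebesgue_on {u..v}) g"
    and g: "integrable (lebesgue_on {u..v}) g"
    and h: "integrable (lebesgue_on {u..v}) (\<lambda>x. \<psi> (Z x) * g x)"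
    and close: "\<And>x. x \<in> {u..v} \<Longrightarrow> \<bar>\<psi> (Z x) - \<psi> (Z u)\<bar> \<le> \<epsilon>"
  shows "\<bar>integral\<^sup>L (lebesgue_on {u..v}) (\<lambda>x. \<psi> (Z x) * g x) - (\<Psi> (Z v) - \<Psi> (Z u))\<bar>
         \<le> 2 * \<epsilon> * integral\<^sup>L (lebesgue_on {u..v}) (\<lambda>x. \<bar>g x\<bar>)"
proof -
  let ?I = "\<lambda>f. integral\<^sup>L (lebesgue_on {u..v}) f"
  have Z_increment_bound: "\<bar>Z v - Z u\<bar> \<le> ?I (\<lambda>x. \<bar>g x\<bar>)"
    using Z_increment integral_abs_bound by simp
  obtain \<xi> where "\<xi> \<in> closed_segment (Z u) (Z v)"
    and MVT: "\<Psi> (Z v) - \<Psi> (Z u) = \<psi> \<xi> * (Z v - Z u)"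
    using MVT_closed_segment[OF \<Psi>] by blast
  then obtain y where "y \<in> {u..v}" "\<xi> = Z y"
    using IVT'_closed_segment_real[of \<xi> Z u v] Z \<open>u \<le> v\<close> by (auto simp: closed_segment_eq_real_ivl)
  then have "\<bar>\<Psi> (Z v) - \<Psi> (Z u) - \<psi> (Z u) * (Z v - Z u)\<bar> \<le> \<epsilon> * \<bar>Z v - Z u\<bar>"
    using MVT close[of y] by (simp add: abs_mult left_diff_distrib[symmetric] mult_right_mono)
  also have "\<dots> \<le> \<epsilon> * ?I (\<lambda>x. \<bar>g x\<bar>)"
    using Z_increment_bound close[of u] \<open>u \<le> v\<close> by (simp add: mult_left_mono)
  finally have MVT_error: "\<bar>\<Psi> (Z v) - \<Psi> (Z u) - \<psi> (Z u) * (Z v - Z u)\<bar> \<le> \<epsilon> * ?I (\<lambda>x. \<bar>g x\<bar>)" .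
  have "?I (\<lambda>x. \<psi> (Z x) * g x) - \<psi> (Z u) * (Z v - Z u) = ?I (\<lambda>x. (\<psi> (Z x) - \<psi> (Z u)) * g x)"
    using Z_increment h g by (simp add: left_diff_distrib)
  also have "\<bar>\<dots>\<bar> \<le> ?I (\<lambda>x. \<epsilon> * \<bar>g x\<bar>)"
  proof (rule integral_abs_bound_integral)
    show "integrable (lebesgue_on {u..v}) (\<lambda>x. (\<psi> (Z x) - \<psi> (Z u)) * g x)"
      using h g by (simp add: left_diff_distrib)
    show "\<bar>(\<psi> (Z x) - \<psi> (Z u)) * g x\<bar> \<le> \<epsilon> * \<bar>g x\<bar>" if "x \<in> space (lebesgue_on {u..v})" for x
      using close[of x] that by (auto simp: abs_mult intro: mult_right_mono)
  qed (use g in simp)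
  finally show ?thesis
    using MVT_error by simp
qed

lemma integral_comp_indefinite_integral_mult:
  fixes \<psi> \<Psi> g :: "real \<Rightarrow> real"
  assumes \<psi>: "continuous_on UNIV \<psi>" and \<Psi>: "\<And>s. (\<Psi> has_real_derivative \<psi> s) (at s)"
    and g: "integrable (lebesgue_on {a..b}) g" and "a \<le> b"
  shows "integral\<^sup>L (lebesgue_on {a..b}) (\<lambda>x. \<psi> (integral\<^sup>L (lebesgue_on {a..x}) g) * g x)
         = \<Psi> (integral\<^sup>L (lebesgue_on {a..b}) g) - \<Psi> 0"
proof -
  define Z where "Z x = integral\<^sup>L (lebesgue_on {a..x}) g" for x
  define h where "h = (\<lambda>x. \<psi> (Z x) * g x)"
  \<comment> \<open>\<open>P\<close> is constant: its increments are small compared to those of the integral of \<open>\<bar>g\<bar>\<close>.\<close>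
  define P where "P x = integral\<^sup>L (lebesgue_on {a..x}) h - \<Psi> (Z x)" for x
  have Z: "continuous_on {a..b} Z"
    unfolding Z_def using g by (rule indefinite_integral_continuous_real)
  have \<psi>Z: "continuous_on {a..b} (\<lambda>x. \<psi> (Z x))"
    using continuous_on_compose2[OF \<psi> Z] by simp
  have h: "integrable (lebesgue_on {a..b}) h"
    unfolding h_def using \<psi>Z g by (rule integrable_continuous_on_mult)
  have "\<bar>P b - P a\<bar> \<le> e" if "e > 0" for e
  proof -
    define G where "G = integral\<^sup>L (lebesgue_on {a..b}) (\<lambda>x. \<bar>g x\<bar>)"
    define \<epsilon> where "\<epsilon> = e / (2 * (G + 1))"
    have "G \<ge> 0"
      by (simp add: G_def)
    then have "\<epsilon> > 0" "2 * \<epsilon> * G \<le> e"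
      using \<open>e > 0\<close> by (auto simp: \<epsilon>_def field_simps)
    obtain \<delta> where "\<delta> > 0" and \<delta>:
      "\<And>x y. x \<in> {a..b} \<Longrightarrow> y \<in> {a..b} \<Longrightarrow> \<bar>y - x\<bar> < \<delta> \<Longrightarrow> \<bar>\<psi> (Z y) - \<psi> (Z x)\<bar> < \<epsilon>"
      using compact_uniformly_continuous[OF \<psi>Z compact_Icc] \<open>\<epsilon> > 0\<close>
      unfolding uniformly_continuous_on_def dist_real_def by metis
    define Q where "Q x = 2 * \<epsilon> * integral\<^sup>L (lebesgue_on {a..x}) (\<lambda>x. \<bar>g x\<bar>)" for x
    have "\<bar>P b - P a\<bar> \<le> Q b - Q a"
    proof (rule increment_bound_from_short_increments[OF \<open>a \<le> b\<close> \<open>\<delta> > 0\<close>])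
      fix u v
      assume uv: "a \<le> u" "u \<le> v" "v \<le> b" "v - u < \<delta>"
      have "P v - P u = integral\<^sup>L (lebesgue_on {u..v}) h - (\<Psi> (Z v) - \<Psi> (Z u))"
        using integral_lebesgue_on_increment[OF h uv(1-3)] by (simp add: P_def)
      also have "\<bar>\<dots>\<bar> \<le> 2 * \<epsilon> * integral\<^sup>L (lebesgue_on {u..v}) (\<lambda>x. \<bar>g x\<bar>)"
        unfolding h_def
      proof (rule chain_rule_short_interval_estimate[OF \<Psi> \<open>u \<le> v\<close>])
        show "continuous_on {u..v} Z"
          using Z uv by (auto elim: continuous_on_subset)
        show "Z v - Z u = integral\<^sup>L (lebesgue_on {u..v}) g"
          using integral_lebesgue_on_increment[OF g uv(1-3)] by (simp add: Z_def)
        show "integrable (lebesgue_on {u..v}) g"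
          and "integrable (lebesgue_on {u..v}) (\<lambda>x. \<psi> (Z x) * g x)"
          using integrable_subinterval[OF g] integrable_subinterval[OF h] uv by (auto simp: h_def)
        show "\<bar>\<psi> (Z x) - \<psi> (Z u)\<bar> \<le> \<epsilon>" if "x \<in> {u..v}" for x
          using \<delta>[of u x] that uv by fastforce
      qed
      also have "\<dots> = Q v - Q u"
        using integral_lebesgue_on_increment[OF integrable_abs[OF g] uv(1-3)]
        by (simp add: Q_def right_diff_distrib[symmetric])
      finally show "\<bar>P v - P u\<bar> \<le> Q v - Q u" .
    qed
    also have "Q b - Q a = 2 * \<epsilon> * G"
      by (simp add: Q_def G_def integral_eq_zero_null_sets)
    finally show ?thesis
      using \<open>2 * \<epsilon> * G \<le> e\<close> by simp
  qed
  then have "P b = P a"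
    using field_le_epsilon[of "\<bar>P b - P a\<bar>" 0] by simp
  then show ?thesis
    by (simp add: P_def Z_def h_def integral_eq_zero_null_sets)
qed

corollary integral_comp_indefinite_integral_mult_eq_0:
  fixes \<psi> g :: "real \<Rightarrow> real"
  assumes "continuous_on UNIV \<psi>" "integrable (lebesgue_on {a..b}) g"
    and "integral\<^sup>L (lebesgue_on {a..b}) g = 0" "a \<le> b"
  shows "integral\<^sup>L (lebesgue_on {a..b}) (\<lambda>x. \<psi> (integral\<^sup>L (lebesgue_on {a..x}) g) * g x) = 0"
proof -
  obtain \<Psi> where \<Psi>: "\<And>s. (\<Psi> has_real_derivative \<psi> s) (at s)"
    using continuous_has_antiderivative[OF assms(1)] by blast
  show ?thesis
    using integral_comp_indefinite_integral_mult[OF assms(1) \<Psi> assms(2,4)] assms(3) by simp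
qed

lemma L2_on_integrable:
  assumes "L2_on L f"
  shows "integrable (lebesgue_on {0..L}) f"
  using assms finite_measure.square_integrable_imp_integrable[OF finite_measure_lebesgue_on]
  unfolding L2_on_def by auto

lemma L2_on_mult_integrable:
  assumes f: "L2_on L f" and g: "L2_on L g"
  shows "integrable (lebesgue_on {0..L}) (\<lambda>x. f x * g x)"
proof (rule Bochner_Integration.integrable_bound)
  show "integrable (lebesgue_on {0..L}) (\<lambda>x. (f x)\<^sup>2 + (g x)\<^sup>2)"
    using f g by (simp add: L2_on_def)
  show "(\<lambda>x. f x * g x) \<in> borel_measurable (lebesgue_on {0..L})"
    using f g unfolding L2_on_def by (intro borel_measurable_times) auto
  have "\<bar>f x * g x\<bar> \<le> 2 * \<bar>f x\<bar> * \<bar>g x\<bar>" for x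
    by (simp add: abs_mult)
  also have "2 * \<bar>f x\<bar> * \<bar>g x\<bar> \<le> (f x)\<^sup>2 + (g x)\<^sup>2" for x
    using sum_squares_bound[of "\<bar>f x\<bar>" "\<bar>g x\<bar>"] by simp
  finally show "AE x in lebesgue_on {0..L}. norm (f x * g x) \<le> norm ((f x)\<^sup>2 + (g x)\<^sup>2)"
    by (intro AE_I2) simp
qed

lemma isCont_real_of_ereal_H_phi:
  assumes "H_phi \<phi>" "\<phi> s \<noteq> \<infinity>"
  shows "isCont (\<lambda>s. real_of_ereal (\<phi> s)) s"
proof -
  have "isCont \<phi> s"
    using assms(1) by (simp add: H_phi_def continuous_on_eq_continuous_at)
  moreover have "isCont real_of_ereal (\<phi> s)"
    using assms by (intro continuous_at_of_ereal) (auto simp: H_phi_def)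
  ultimately show ?thesis
    by (rule isCont_o2)
qed

lemma H_phi_continuous_approximation:
  assumes "H_phi \<phi>"
  obtains \<psi> :: "nat \<Rightarrow> real \<Rightarrow> real"
  where "\<And>n. continuous_on UNIV (\<psi> n)"
    and "\<And>n s. \<bar>\<psi> n s\<bar> \<le> \<bar>real_of_ereal (\<phi> s)\<bar>"
    and "\<And>s. \<phi> s \<noteq> \<infinity> \<Longrightarrow> (\<lambda>n. \<psi> n s) \<longlonglongrightarrow> real_of_ereal (\<phi> s)"
proof (cases "\<phi> 0 = \<infinity>")
  case False
  then have "\<phi> s \<noteq> \<infinity>" for s
    using assms by (cases "s = 0") (auto simp: H_phi_def)
  then show ?thesis
    using that[of "\<lambda>_ s. real_of_ereal (\<phi> s)"] isCont_real_of_ereal_H_phi[OF assms]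
    by (auto intro: continuous_at_imp_continuous_on)
next
  case True
  \<comment> \<open>\<open>\<kappa> n\<close> vanishes on \<open>\<bar>s\<bar> \<le> 1 / (n + 1)\<close> and equals 1 on \<open>\<bar>s\<bar> \<ge> 2 / (n + 1)\<close>.\<close>
  define \<kappa> :: "nat \<Rightarrow> real \<Rightarrow> real" where "\<kappa> n s = min 1 (max 0 (real (Suc n) * \<bar>s\<bar> - 1))" for n s
  show ?thesis
  proof (rule that[of "\<lambda>n s. real_of_ereal (\<phi> s) * \<kappa> n s"])
    show "continuous_on UNIV (\<lambda>s. real_of_ereal (\<phi> s) * \<kappa> n s)" for n
    proof (intro continuous_at_imp_continuous_on ballI)
      fix s :: real
      show "isCont (\<lambda>s. real_of_ereal (\<phi> s) * \<kappa> n s) s"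
      proof (cases "s = 0")
        case True
        have vanishes: "\<forall>\<^sub>F t in nhds s. real_of_ereal (\<phi> t) * \<kappa> n t = 0"
          unfolding eventually_nhds_metric
          by (rule exI[of _ "1 / real (Suc n)"]) (auto simp: True \<kappa>_def dist_real_def field_simps)
        show ?thesis
          by (subst isCont_cong[OF vanishes]) simp
      next
        case False
        then have "\<phi> s \<noteq> \<infinity>"
          using assms by (auto simp: H_phi_def)
        then show ?thesis
          unfolding \<kappa>_def by (intro continuous_intros isCont_real_of_ereal_H_phi[OF assms])
      qed
    qed
    show "\<bar>real_of_ereal (\<phi> s) * \<kappa> n s\<bar> \<le> \<bar>real_of_ereal (\<phi> s)\<bar>" for n s
    proof -
      have "\<bar>\<kappa> n s\<bar> \<le> 1"
        by (simp add: \<kappa>_def)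
      then show ?thesis
        by (metis abs_ge_zero abs_mult mult_left_le)
    qed
    show "(\<lambda>n. real_of_ereal (\<phi> s) * \<kappa> n s) \<longlonglongrightarrow> real_of_ereal (\<phi> s)" if "\<phi> s \<noteq> \<infinity>" for s
    proof (rule tendsto_eventually)
      have "s \<noteq> 0"
        using that True by auto
      then obtain N :: nat where N: "2 / \<bar>s\<bar> \<le> real N"
        using real_arch_simple by blast
      have "\<kappa> n s = 1" if "n \<ge> N" for n
      proof -
        have "2 \<le> real N * \<bar>s\<bar>"
          using N \<open>s \<noteq> 0\<close> by (simp add: field_simps)
        also have "\<dots> \<le> real (Suc n) * \<bar>s\<bar>"
          using that by (intro mult_right_mono) auto
        finally show ?thesis
          by (simp add: \<kappa>_def)
      qed
      then show "\<forall>\<^sub>F n in sequentially. real_of_ereal (\<phi> s) * \<kappa> n s = real_of_ereal (\<phi> s)"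
        by (auto simp: eventually_sequentially)
    qed
  qed
qed

theorem mainTheorem18:
  fixes L :: real and \<phi> :: "real \<Rightarrow> ereal" and z dz :: "real \<Rightarrow> real"
  assumes "L > 0"
    and "H_phi \<phi>"
    and "H10_with_deriv L z dz"
    and "AE x in lebesgue_on {0..L}. \<phi> (z x) \<noteq> \<infinity>"
    and "L2_on L (\<lambda>x. real_of_ereal (\<phi> (z x)))"
  shows "integral\<^sup>L (lebesgue_on {0..L}) (\<lambda>x. real_of_ereal (\<phi> (z x)) * dz x) = 0"
proof -
  define Z where "Z x = integral\<^sup>L (lebesgue_on {0..x}) dz" for x
  define F where "F x = real_of_ereal (\<phi> (z x))" for x
  have dz: "L2_on L dz" "integrable (lebesgue_on {0..L}) dz" "integral\<^sup>L (lebesgue_on {0..L}) dz = 0"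
    and z_eq_Z: "AE x in lebesgue_on {0..L}. z x = Z x"
    using assms(3) L2_on_integrable by (auto simp: H10_with_deriv_def Z_def)
  have Z: "continuous_on {0..L} Z"
    unfolding Z_def using dz(2) by (rule indefinite_integral_continuous_real)
  obtain \<psi> where \<psi>: "\<And>n. continuous_on UNIV (\<psi> n)" "\<And>n s. \<bar>\<psi> n s\<bar> \<le> \<bar>real_of_ereal (\<phi> s)\<bar>"
    "\<And>s. \<phi> s \<noteq> \<infinity> \<Longrightarrow> (\<lambda>n. \<psi> n s) \<longlonglongrightarrow> real_of_ereal (\<phi> s)"
    using H_phi_continuous_approximation[OF assms(2)] by blast
  have vanishing: "integral\<^sup>L (lebesgue_on {0..L}) (\<lambda>x. \<psi> n (Z x) * dz x) = 0" for n
    unfolding Z_def using assms(1) by (intro integral_comp_indefinite_integral_mult_eq_0 \<psi>(1) dz) simp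
  have "(\<lambda>n. integral\<^sup>L (lebesgue_on {0..L}) (\<lambda>x. \<psi> n (Z x) * dz x))
        \<longlonglongrightarrow> integral\<^sup>L (lebesgue_on {0..L}) (\<lambda>x. F x * dz x)"
  proof (rule integral_dominated_convergence[where w="\<lambda>x. \<bar>F x * dz x\<bar>"])
    have "integrable (lebesgue_on {0..L}) (\<lambda>x. F x * dz x)"
      using L2_on_mult_integrable[OF assms(5) dz(1)] by (simp add: F_def)
    then show "integrable (lebesgue_on {0..L}) (\<lambda>x. \<bar>F x * dz x\<bar>)"
      and "(\<lambda>x. F x * dz x) \<in> borel_measurable (lebesgue_on {0..L})"
      by auto
    show "(\<lambda>x. \<psi> n (Z x) * dz x) \<in> borel_measurable (lebesgue_on {0..L})" for n
      using continuous_on_compose2[OF \<psi>(1) Z] dz(2)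
      by (intro borel_measurable_integrable integrable_continuous_on_mult) auto
    show "AE x in lebesgue_on {0..L}. (\<lambda>n. \<psi> n (Z x) * dz x) \<longlonglongrightarrow> F x * dz x"
      using z_eq_Z assms(4)
      by eventually_elim (auto simp: F_def intro!: tendsto_mult \<psi>(3))
    show "AE x in lebesgue_on {0..L}. norm (\<psi> n (Z x) * dz x) \<le> \<bar>F x * dz x\<bar>" for n
      using z_eq_Z
      by eventually_elim (simp add: F_def abs_mult mult_right_mono \<psi>(2) del: abs_real_of_ereal)
  qed
  then show ?thesis
    using vanishing LIMSEQ_unique[OF _ tendsto_const] by (simp add: F_def)
qed

end
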